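(* Let $m$ be a non-zero integer and $n$ any integer. Then \[ \sum_{k = 1}^n L_{mk}^{\,4} = \frac{F_{2mn+m}\left(L_{2mn + m} + 4( - 1)^{mn} L_m \right)}{F_{2m}} + 6n-5\,. \]
   Context: $F_i$ and $L_i$ denote the Fibonacci and Lucas numbers, defined for all $i\in\mathbb{Z}$ by $F_i=F_{i-1}+F_{i-2}$, $F_0=0$, $F_1=1$, and $L_i=L_{i-1}+L_{i-2}$, $L_0=2$, $L_1=1$; equivalently $F_{-i}=(-1)^{i-1}F_i$ and $L_{-i}=(-1)^iL_i$. Summation convention for an arbitrary integer upper limit: $\sum_{k=a}^{a-1} f(k)=0$, and for $n<a-1$, $\sum_{k=a}^{n} f(k) = -\sum_{k=n+1}^{a-1} f(k)$. *)

theory Defs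
  imports Complex_Main
begin

fun fibn :: "nat \<Rightarrow> int" where
  "fibn 0 = 0"
| "fibn (Suc 0) = 1"
| "fibn (Suc (Suc n)) = fibn (Suc n) + fibn n"

fun lucn :: "nat \<Rightarrow> int" where
  "lucn 0 = 2"
| "lucn (Suc 0) = 1"
| "lucn (Suc (Suc n)) = lucn (Suc n) + lucn n"

definition F :: "int \<Rightarrow> int" where
  "F i = (if 0 \<le> i then fibn (nat i) else (-1) ^ (nat (-i) - 1) * fibn (nat (-i)))"

definition L :: "int \<Rightarrow> int" where
  "L i = (if 0 \<le> i then lucn (nat i) else (-1) ^ (nat (-i)) * lucn (nat (-i)))"

text \<open>Sum over k = a..n with arbitrary integer upper limit n:
  empty for n = a - 1, and for n < a - 1 equal to minus the sum over k = n+1..a-1.\<close>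
definition isum :: "int \<Rightarrow> int \<Rightarrow> (int \<Rightarrow> 'a::ab_group_add) \<Rightarrow> 'a" where
  "isum a n f = (if a - 1 \<le> n then (\<Sum>k\<in>{a..n}. f k) else - (\<Sum>k\<in>{n+1..a-1}. f k))"

end

(*
  Binet's formulas turn the statement into an identity about u = phi^m and v = psi^m, where
  u v = (-1)^m: then L(m k) = u^k + v^k, F(m k) = (u^k - v^k) / sqrt 5, and the right-hand side
  is N(n) / (u^2 - v^2) + 6 n - 5 with
    N(n) = (u^(2n+1) - v^(2n+1)) (u^(2n+1) + v^(2n+1) + 4 (u v)^n (u + v)).
  This holds in any field as soon as u v = 1 or -1 and u^2 <> v^2: both sides vanish at n = 0, and
  with a = u^n, b = v^n the increment N(n) - N(n - 1) is ((a + b)^4 - 6 (a b)^2) (u^2 - v^2) by a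
  polynomial identity, where (a b)^2 = 1.  Telescoping works for negative n as well.
*)
theory Submission
  imports Defs
begin

lemma isum_diff_last: "isum a n f - isum a (n - 1) f = f n"
proof (cases "a \<le> n")
  case True
  then have "{a..n} = insert n {a..n - 1}" by auto
  with True show ?thesis by (simp add: isum_def)
next
  case False
  then have "{n..a - 1} = insert n {n + 1..a - 1}" by auto
  with False show ?thesis by (simp add: isum_def)
qed

lemma isum_eqI:
  assumes "g (a - 1) = 0" and "\<And>k. g k - g (k - 1) = f k"
  shows "g n = isum a n f"
proof (induction n rule: int_induct[where k = "a - 1"])
  case base
  show ?case using assms(1) by (simp add: isum_def)
next
  case (step1 k)
  then show ?case using assms(2)[of "k + 1"] isum_diff_last[of a "k + 1" f]
    by (simp add: algebra_simps)
next
  case (step2 k)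
  then show ?case using assms(2)[of k] isum_diff_last[of a k f]
    by (simp add: algebra_simps)
qed

lemma of_int_isum: "of_int (isum a n f) = isum a n (\<lambda>k. of_int (f k))"
  by (simp add: isum_def)

lemma power_int_double: "x powi (2 * j) = (x powi j)^2" for x :: "'a::division_ring"
  using power_int_mult[of x j 2] by (simp add: mult.commute)

lemma power_int_double_plus_one:
  "x \<noteq> 0 \<Longrightarrow> x powi (2 * j + 1) = (x powi j)^2 * x" for x :: "'a::division_ring"
  by (simp add: power_int_add power_int_double)

lemma power_int_double_minus_one:
  "x \<noteq> 0 \<Longrightarrow> x powi (2 * j - 1) = (x powi j)^2 * inverse x" for x :: "'a::field"
  using power_int_diff[of x "2 * j" 1] by (simp add: power_int_double divide_inverse)

lemma fourth_power_difference_identity: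
  fixes a b u v :: "'a::comm_ring_1"
  shows "(a^2*u - b^2*v) * (a^2*u + b^2*v + 4*(a*b)*(u + v))
       - (a^2*v - b^2*u) * (a^2*v + b^2*u + 4*(a*b)*(u + v))
       = ((a + b)^4 - 6*(a*b)^2) * (u^2 - v^2)"
  by (simp add: algebra_simps power2_eq_square power4_eq_xxxx)

definition fourth_power_sum_numerator :: "'a::field \<Rightarrow> 'a \<Rightarrow> int \<Rightarrow> 'a" where
  "fourth_power_sum_numerator u v n =
     (u powi (2*n + 1) - v powi (2*n + 1)) * (u powi (2*n + 1) + v powi (2*n + 1) + 4 * (u*v) powi n * (u + v))"

lemma fourth_power_sum_numerator_diff:
  fixes u v :: "'a::field"
  assumes "u * v = 1 \<or> u * v = -1"
  shows "fourth_power_sum_numerator u v k - fourth_power_sum_numerator u v (k - 1)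
       = ((u powi k + v powi k)^4 - 6) * (u^2 - v^2)"
proof -
  define t where "t = u * v"
  define a where "a = u powi k"
  define b where "b = v powi k"
  have "u \<noteq> 0" "v \<noteq> 0" "t \<noteq> 0" "t^2 = 1" using assms by (auto simp: t_def)
  have ab: "a * b = t powi k" by (simp add: a_def b_def t_def power_int_mult_distrib)
  have "(a * b)^2 = (t^2) powi k" by (simp add: ab power_int_power flip: power_int_double)
  with \<open>t^2 = 1\<close> have "(a * b)^2 = 1" by simp
  have "fourth_power_sum_numerator u v k = (a^2*u - b^2*v) * (a^2*u + b^2*v + 4*(a*b)*(u + v))"
    using \<open>u \<noteq> 0\<close> \<open>v \<noteq> 0\<close>
    by (simp add: fourth_power_sum_numerator_def power_int_double_plus_one a_def b_def power_int_mult_distrib)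
  moreover have "fourth_power_sum_numerator u v (k - 1)
      = t^2 * ((a^2*v - b^2*u) * (a^2*v + b^2*u + 4*(a*b)*(u + v)))"
  proof -
    \<comment> \<open>Lowering the index divides by u, v and t; as t^2 = 1 this is multiplication by v t, u t and t.\<close>
    have "inverse u = v * t" "inverse v = u * t"
      using \<open>t^2 = 1\<close> \<open>u \<noteq> 0\<close> \<open>v \<noteq> 0\<close> by (auto simp: t_def field_simps power2_eq_square)
    then have "u powi (2*(k - 1) + 1) = a^2 * (v*t)" "v powi (2*(k - 1) + 1) = b^2 * (u*t)"
      using \<open>u \<noteq> 0\<close> \<open>v \<noteq> 0\<close> by (simp_all add: power_int_double_minus_one a_def b_def)
    moreover have "t powi (k - 1) = a * b * t"
      using \<open>t \<noteq> 0\<close> \<open>t^2 = 1\<close> by (simp add: ab power_int_diff field_simps power2_eq_square)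
    ultimately have "fourth_power_sum_numerator u v (k - 1)
        = (a^2*(v*t) - b^2*(u*t)) * (a^2*(v*t) + b^2*(u*t) + 4*(a*b*t)*(u + v))"
      by (simp add: fourth_power_sum_numerator_def t_def)
    then show ?thesis by (simp add: algebra_simps power2_eq_square)
  qed
  ultimately show ?thesis
    using \<open>t^2 = 1\<close> \<open>(a * b)^2 = 1\<close> fourth_power_difference_identity[of a u b v]
    by (simp add: a_def b_def)
qed

lemma isum_Lucas_sequence_fourth_powers:
  fixes u v :: "'a::field"
  assumes "u * v = 1 \<or> u * v = -1" and "u^2 \<noteq> v^2"
  shows "isum 1 n (\<lambda>k. (u powi k + v powi k)^4) =
    fourth_power_sum_numerator u v n / (u^2 - v^2) + 6 * of_int n - 5"
proof -
  define g where "g k = fourth_power_sum_numerator u v k / (u^2 - v^2) + 6 * of_int k - 5" for k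
  have D: "u^2 - v^2 \<noteq> 0" using assms(2) by simp
  have numerator_0: "fourth_power_sum_numerator u v 0 = 5 * (u^2 - v^2)"
    by (simp add: fourth_power_sum_numerator_def algebra_simps power2_eq_square)
  have "g 0 = 0"
    unfolding g_def numerator_0 by (simp only: nonzero_mult_div_cancel_right[OF D]) simp
  moreover have "g k - g (k - 1) = (u powi k + v powi k)^4" for k
  proof -
    have "g k - g (k - 1)
        = (fourth_power_sum_numerator u v k - fourth_power_sum_numerator u v (k - 1)) / (u^2 - v^2) + 6"
      by (simp add: g_def diff_divide_distrib algebra_simps)
    also have "\<dots> = (u powi k + v powi k)^4"
      by (simp add: fourth_power_sum_numerator_diff[OF assms(1)] nonzero_mult_div_cancel_right[OF D])
    finally show ?thesis .
  qed
  ultimately show ?thesis using isum_eqI[of g 1] by (simp add: g_def)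
qed

definition phi :: real where "phi = (1 + sqrt 5) / 2"
definition psi :: real where "psi = (1 - sqrt 5) / 2"

lemma phi_squared: "phi^2 = phi + 1"
  by (simp add: phi_def power2_eq_square field_simps)

lemma psi_squared: "psi^2 = psi + 1"
  by (simp add: psi_def power2_eq_square field_simps)

lemma phi_times_psi: "phi * psi = -1"
  by (simp add: phi_def psi_def field_simps)

lemma phi_plus_psi: "phi + psi = 1"
  by (simp add: phi_def psi_def field_simps)

lemma phi_minus_psi: "phi - psi = sqrt 5"
  by (simp add: phi_def psi_def field_simps)

lemma power_Suc_Suc_if_square_eq:
  fixes x :: "'a::comm_ring_1"
  assumes "x^2 = x + 1"
  shows "x ^ Suc (Suc n) = x ^ Suc n + x ^ n"
proof -
  have "x ^ Suc (Suc n) = x^2 * x^n" by (simp add: power2_eq_square)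
  then show ?thesis by (simp add: assms algebra_simps)
qed

lemma fibn_Binet: "real_of_int (fibn n) = (phi^n - psi^n) / sqrt 5"
  by (induction n rule: fibn.induct)
     (simp_all add: phi_minus_psi power_Suc_Suc_if_square_eq[OF phi_squared]
        power_Suc_Suc_if_square_eq[OF psi_squared] add_divide_distrib diff_divide_distrib del: power_Suc)

lemma lucn_Binet: "real_of_int (lucn n) = phi^n + psi^n"
  by (induction n rule: lucn.induct)
     (simp_all add: phi_plus_psi power_Suc_Suc_if_square_eq[OF phi_squared]
        power_Suc_Suc_if_square_eq[OF psi_squared] del: power_Suc)

lemma phi_power_int_neg: "phi powi (- int j) = (- psi)^j"
proof -
  have "inverse phi = - psi" by (rule inverse_unique) (simp add: phi_times_psi)
  then show ?thesis by (simp add: power_int_minus power_inverse[symmetric])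
qed

lemma psi_power_int_neg: "psi powi (- int j) = (- phi)^j"
proof -
  have "inverse psi = - phi" by (rule inverse_unique) (simp add: phi_times_psi mult.commute)
  then show ?thesis by (simp add: power_int_minus power_inverse[symmetric])
qed

lemma F_Binet: "real_of_int (F i) = (phi powi i - psi powi i) / sqrt 5"
proof (cases "0 \<le> i")
  case True
  then show ?thesis using fibn_Binet[of "nat i"] by (simp add: F_def power_int_def)
next
  case False
  then obtain j where j: "i = - int j" "j > 0" by (metis neg_int_cases not_le)
  have "(-1::real) ^ (j - 1) = - ((-1) ^ j)" using \<open>j > 0\<close> by (cases j) simp_all
  moreover have "phi^j = psi^j + real_of_int (fibn j) * sqrt 5" using fibn_Binet[of j] by simp
  ultimately show ?thesis using j
    by (simp add: F_def phi_power_int_neg psi_power_int_neg power_minus[of phi] power_minus[of psi]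
        field_simps)
qed

lemma L_Binet: "real_of_int (L i) = phi powi i + psi powi i"
proof (cases "0 \<le> i")
  case True
  then show ?thesis using lucn_Binet[of "nat i"] by (simp add: L_def power_int_def)
next
  case False
  then obtain j where "i = - int j" by (metis neg_int_cases not_le)
  then show ?thesis using lucn_Binet[of j]
    by (simp add: L_def phi_power_int_neg psi_power_int_neg power_minus[of phi] power_minus[of psi] field_simps)
qed

lemma fibn_pos: "n > 0 \<Longrightarrow> fibn n > 0"
proof (induction n rule: fibn.induct)
  case (3 n)
  then show ?case by (cases n) (simp_all add: add_pos_nonneg)
qed simp_all

lemma F_nonzero: "i \<noteq> 0 \<Longrightarrow> F i \<noteq> 0"
  using fibn_pos[of "nat i"] fibn_pos[of "nat (- i)"] by (auto simp: F_def)

theorem theorem2: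
  fixes m n :: int
  assumes "m \<noteq> 0"
  shows "real_of_int (isum 1 n (\<lambda>k. (L (m * k)) ^ 4)) =
    real_of_int (F (2*m*n + m)) * (real_of_int (L (2*m*n + m)) + 4 * ((-1::real) powi (m * n)) * real_of_int (L m))
      / real_of_int (F (2*m)) + 6 * real_of_int n - 5"
proof -
  define u where "u = phi powi m"
  define v where "v = psi powi m"
  have Binet_multiple: "real_of_int (F (m * k)) = (u powi k - v powi k) / sqrt 5"
    "real_of_int (L (m * k)) = u powi k + v powi k" for k
    by (simp_all add: u_def v_def F_Binet L_Binet power_int_mult)
  have "u * v = (-1) powi m" by (simp add: u_def v_def phi_times_psi flip: power_int_mult_distrib)
  then have uv: "u * v = 1 \<or> u * v = -1" by (simp add: power_int_minus_left)
  have F_double: "real_of_int (F (2*m)) = (u^2 - v^2) / sqrt 5"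
    using Binet_multiple(1)[of 2] by (simp add: mult.commute)
  with F_nonzero[of "2*m"] assms have "u^2 \<noteq> v^2" by auto
  have "2*m*n + m = m * (2*n + 1)" by algebra
  then have "real_of_int (F (2*m*n + m)) * (real_of_int (L (2*m*n + m)) + 4 * ((-1::real) powi (m * n)) * real_of_int (L m))
      / real_of_int (F (2*m)) = fourth_power_sum_numerator u v n / (u^2 - v^2)"
    using Binet_multiple[of 1]
    by (simp add: Binet_multiple F_double power_int_mult \<open>u * v = (-1) powi m\<close> fourth_power_sum_numerator_def)
  with isum_Lucas_sequence_fourth_powers[OF uv \<open>u^2 \<noteq> v^2\<close>, of n] show ?thesis
    by (simp add: of_int_isum Binet_multiple)
qed

end
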